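(* Let $G$ be a finite graph and $\kappa$ a positive integer, and for each vertex $u$ let $\mathbb{F}(u)$ be a set of partial colorings of $G$ in each of which $u$ is colored. If every set $\mathbb{F}(u)$ is closed upward, then the set of allowed colorings is closed downward. Consequently, in that case, for any vertex $v$ and any partial coloring $\varphi\in\mathbb{F}(v)$ such that uncoloring $v$ in $\varphi$ yields an allowed coloring, uncoloring any set $S$ of vertices with $v\in S$ yields an allowed coloring.
   Context: A partial coloring of $G$ is a map $\varphi: V(G)\to\{\bullet,1,\dots,\kappa\}$, where $\bullet$ means uncolored. A partial coloring $\varphi$ is allowed if and only if either no vertex is colored, or there exists a colored vertex $v$ with $\varphi\notin\mathbb{F}(v)$ such that the coloring obtained from $\varphi$ by uncoloring $v$ is allowed (recursive definition). A set $X$ of partial colorings is closed upward (resp. closed downward) if, for any partial coloring in $X$, coloring any uncolored vertex with any color (resp. uncoloring any colored vertex) yields a partial coloring in $X$. *)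

theory Defs
  imports Main
begin

(* A partial coloring of a graph with vertex set V and colors {1..kappa}:
   a map 'v => nat option, None = uncolored (the bullet), Some c = color c.
   Vertices outside V are always None. *)
definition partial_colorings :: "'v set \<Rightarrow> nat \<Rightarrow> ('v \<Rightarrow> nat option) set" where
  "partial_colorings V \<kappa> =
     {\<phi>. (\<forall>x. x \<notin> V \<longrightarrow> \<phi> x = None) \<and> (\<forall>x c. \<phi> x = Some c \<longrightarrow> 1 \<le> c \<and> c \<le> \<kappa>)}"

inductive allowed :: "'v set \<Rightarrow> nat \<Rightarrow> ('v \<Rightarrow> ('v \<Rightarrow> nat option) set) \<Rightarrow> ('v \<Rightarrow> nat option) \<Rightarrow> bool"
  for V \<kappa> F where
  empty: "allowed V \<kappa> F (\<lambda>_. None)"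
| step: "\<phi> \<in> partial_colorings V \<kappa> \<Longrightarrow> v \<in> V \<Longrightarrow> \<phi> v \<noteq> None \<Longrightarrow> \<phi> \<notin> F v
         \<Longrightarrow> allowed V \<kappa> F (\<phi>(v := None)) \<Longrightarrow> allowed V \<kappa> F \<phi>"

definition closed_upward :: "'v set \<Rightarrow> nat \<Rightarrow> ('v \<Rightarrow> nat option) set \<Rightarrow> bool" where
  "closed_upward V \<kappa> X \<longleftrightarrow>
     (\<forall>\<phi>\<in>X. \<forall>v\<in>V. \<phi> v = None \<longrightarrow> (\<forall>c\<in>{1..\<kappa>}. \<phi>(v := Some c) \<in> X))"

definition closed_downward :: "'v set \<Rightarrow> ('v \<Rightarrow> nat option) set \<Rightarrow> bool" where
  "closed_downward V X \<longleftrightarrow> (\<forall>\<phi>\<in>X. \<forall>v\<in>V. \<phi> v \<noteq> None \<longrightarrow> \<phi>(v := None) \<in> X)"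

end

theory Submission
  imports Defs
begin

(* Induction on the derivation of "phi allowed": to uncolor v, uncolor it in the
   allowed predecessor phi(w := None) and keep the same last vertex w.  That w is
   still legitimate, i.e. phi(v := None) is not in F w, because F w is closed upward
   and recoloring v would put phi itself into F w.  Uncoloring a finite set S is then
   iterated single uncoloring, and v in S absorbs the first uncoloring of v. *)

lemma closed_upward_uncolor_notin:
  assumes "closed_upward V \<kappa> X" and "\<phi> \<in> partial_colorings V \<kappa>" and "\<phi> \<notin> X"
  shows "\<phi>(v := None) \<notin> X"
proof
  assume uncolored: "\<phi>(v := None) \<in> X"
  show False
  proof (cases "\<phi> v")
    case None
    then show False using uncolored \<open>\<phi> \<notin> X\<close> by (simp add: fun_upd_idem)
  next
    case (Some c)
    then have "v \<in> V" and "c \<in> {1..\<kappa>}"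
      using \<open>\<phi> \<in> partial_colorings V \<kappa>\<close> unfolding partial_colorings_def by auto
    have "\<forall>w\<in>V. (\<phi>(v := None)) w = None \<longrightarrow> (\<forall>c\<in>{1..\<kappa>}. (\<phi>(v := None))(w := Some c) \<in> X)"
      using \<open>closed_upward V \<kappa> X\<close> uncolored unfolding closed_upward_def by (rule bspec)
    from this[rule_format, OF \<open>v \<in> V\<close> _ \<open>c \<in> {1..\<kappa>}\<close>]
    have "(\<phi>(v := None))(v := Some c) \<in> X" by simp
    with Some \<open>\<phi> \<notin> X\<close> show False by (simp add: fun_upd_idem)
  qed
qed

lemma partial_colorings_uncolor:
  "\<phi> \<in> partial_colorings V \<kappa> \<Longrightarrow> \<phi>(v := None) \<in> partial_colorings V \<kappa>"
  unfolding partial_colorings_def by auto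

lemma allowed_uncolor:
  assumes up: "\<forall>u\<in>V. closed_upward V \<kappa> (F u)" and "allowed V \<kappa> F \<phi>"
  shows "allowed V \<kappa> F (\<phi>(v := None))"
  using \<open>allowed V \<kappa> F \<phi>\<close>
proof (induction arbitrary: v rule: allowed.induct)
  case empty
  then show ?case by (simp add: allowed.empty)
next
  case (step \<phi> w)
  show ?case
  proof (cases "v = w")
    case True
    with step.hyps(5) show ?thesis by (simp only:)
  next
    case False
    then have "(\<phi>(v := None)) w \<noteq> None" using step.hyps(3) by simp
    moreover have "\<phi>(v := None) \<notin> F w"
      by (rule closed_upward_uncolor_notin[OF bspec[OF up step.hyps(2)] step.hyps(1,4)])
    moreover have "allowed V \<kappa> F ((\<phi>(v := None))(w := None))"
      using step.IH[of v] by (simp only: fun_upd_twist[OF False])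
    ultimately show ?thesis
      by (rule allowed.step[OF partial_colorings_uncolor[OF step.hyps(1)] step.hyps(2)])
  qed
qed

lemma allowed_uncolor_set:
  assumes up: "\<forall>u\<in>V. closed_upward V \<kappa> (F u)" and "finite T" and "allowed V \<kappa> F \<phi>"
  shows "allowed V \<kappa> F (\<lambda>x. if x \<in> T then None else \<phi> x)"
  using \<open>finite T\<close>
proof (induction T rule: finite_induct)
  case empty
  with \<open>allowed V \<kappa> F \<phi>\<close> show ?case by simp
next
  case (insert x T)
  have "(\<lambda>y. if y \<in> insert x T then None else \<phi> y)
      = (\<lambda>y. if y \<in> T then None else \<phi> y)(x := None)"
    by auto
  with allowed_uncolor[OF up insert.IH] show ?case by simp
qed

theorem lemma5:
  fixes V :: "'v set" and \<kappa> :: nat and F :: "'v \<Rightarrow> ('v \<Rightarrow> nat option) set"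
  assumes "finite V"
    and "\<kappa> > 0"
    and "\<forall>u\<in>V. F u \<subseteq> partial_colorings V \<kappa>"
    and "\<forall>u\<in>V. \<forall>\<phi>\<in>F u. \<phi> u \<noteq> None"
    and "\<forall>u\<in>V. closed_upward V \<kappa> (F u)"
  shows "closed_downward V {\<phi>. allowed V \<kappa> F \<phi>}
    \<and> (\<forall>v\<in>V. \<forall>\<phi>\<in>F v. allowed V \<kappa> F (\<phi>(v := None)) \<longrightarrow>
          (\<forall>S. S \<subseteq> V \<and> v \<in> S \<longrightarrow> allowed V \<kappa> F (\<lambda>x. if x \<in> S then None else \<phi> x)))"
proof (intro conjI ballI impI allI)
  show "closed_downward V {\<phi>. allowed V \<kappa> F \<phi>}"
    unfolding closed_downward_def by (simp add: allowed_uncolor[OF assms(5)])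
next
  fix v \<phi> S
  assume "allowed V \<kappa> F (\<phi>(v := None))" and S: "S \<subseteq> V \<and> v \<in> S"
  moreover have "finite S" using S \<open>finite V\<close> finite_subset by blast
  ultimately have "allowed V \<kappa> F (\<lambda>x. if x \<in> S then None else (\<phi>(v := None)) x)"
    using allowed_uncolor_set[OF assms(5)] by blast
  moreover have "(\<lambda>x. if x \<in> S then None else (\<phi>(v := None)) x) = (\<lambda>x. if x \<in> S then None else \<phi> x)"
    using S by auto
  ultimately show "allowed V \<kappa> F (\<lambda>x. if x \<in> S then None else \<phi> x)" by simp
qed

end
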